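(* Consider the chain pendulum on a cart described in the context, and an equilibrium specified by $s=(s_1,\dots,s_n)\in\{1,-1\}^n$, namely $q_i=s_ie_3$, $\omega_i=0$ for all $i$, and $x=0$, $\dot x=0$. Parametrize perturbations by $x=\epsilon\,\delta x$, $q_i=\exp(\epsilon\hat\xi_i)s_ie_3$, $\omega_i=\epsilon\,\delta\omega_i$ with $\delta x\in\mathbb{R}^2$, $\xi_i,\delta\omega_i\in\mathbb{R}^3$, $\xi_i\cdot e_3=\delta\omega_i\cdot e_3=0$, and set $\mathbf{x}_q=[C^T\xi_1;\dots;C^T\xi_n]\in\mathbb{R}^{2n}$, $\mathbf{x}=[\delta x;\mathbf{x}_q]\in\mathbb{R}^{2n+2}$. Then the linearization of the equations of motion about this equilibrium is \[ \mathbf{M}\ddot{\mathbf{x}}+\mathbf{G}\mathbf{x}=\mathbf{B}u,\qquad \mathbf{M}=\begin{bmatrix}\mathbf{M}_{xx}&\mathbf{M}_{xq}\\ \mathbf{M}_{qx}&\mathbf{M}_{qq}\end{bmatrix},\quad \mathbf{G}=\begin{bmatrix}0_{2}&0_{2\times2n}\\0_{2n\times2}&\mathbf{G}_{qq}\end{bmatrix},\quad \mathbf{B}=\begin{bmatrix}I_2\\0_{2n\times2}\end{bmatrix}, \] where $\mathbf{M}_{xx}=M_{00}I_2$, $\mathbf{M}_{xq}=\big[-s_1M_{01}\hat e_3C,\ -s_2M_{02}\hat e_3C,\ \dots,\ -s_nM_{0n}\hat e_3C\big]\in\mathbb{R}^{2\times2n}$, $\mathbf{M}_{qx}=\mathbf{M}_{xq}^T$,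 $\mathbf{M}_{qq}\in\mathbb{R}^{2n\times2n}$ is the block matrix whose $(i,j)$ $2\times2$ block is $s_is_jM_{ij}I_2$ (so the diagonal blocks are $M_{ii}I_2$), and $\mathbf{G}_{qq}=\mathrm{diag}\big[s_1\big(\sum_{a=1}^n m_a\big)g\,l_1I_2,\ \dots,\ s_i\big(\sum_{a=i}^n m_a\big)g\,l_iI_2,\ \dots,\ s_nm_ng\,l_nI_2\big]$.
   Context: Let $n\ge1$. $\mathsf{S}^2=\{q\in\mathbb{R}^3:\|q\|=1\}$. Let $e_1,e_2,e_3$ be the standard basis of $\mathbb{R}^3$, with $e_3$ the direction of gravity, $g>0$ the gravitational acceleration, and $C=[e_1,e_2]\in\mathbb{R}^{3\times2}$. For $y\in\mathbb{R}^3$, $\hat y$ denotes the $3\times3$ skew-symmetric matrix with $\hat y z=y\times z$; $\exp$ is the matrix exponential. A cart of mass $m>0$ with position $x\in\mathbb{R}^2$ moves in a horizontal plane under a control force $u\in\mathbb{R}^2$; a serial chain of $n$ links with spherical joints is attached, link $i$ having length $l_i>0$, direction $q_i\in\mathsf{S}^2$, point mass $m_i>0$ at its outboard end, and angular velocity $\omega_i\in\mathbb{R}^3$ with $\omega_i\cdot q_i=0$. Define $M_{00}=m+\sum_{i=1}^n m_i$, $M_{0i}=\big(\sum_{a=i}^n m_a\big)l_iC^T\in\mathbb{R}^{2\times3}$, $M_{i0}=M_{0i}^T$, $M_{ij}=\big(\sum_{a=\max\{i,j\}}^n m_a\big)l_il_j$. The equations of motion (the Euler–Lagrange equations for the Lagrangian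 $L=\tfrac12M_{00}\|\dot x\|^2+\dot x\cdot\sum_iM_{0i}\dot q_i+\tfrac12\sum_{i,j}M_{ij}\dot q_i\cdot\dot q_j+\sum_i(\sum_{a=i}^n m_a)g\,l_i\,e_3\cdot q_i$ with force $u$ on the cart) are $M_{00}\ddot x-\sum_{j=1}^n M_{0j}\hat q_j\dot\omega_j=\sum_{j=1}^n M_{0j}\|\omega_j\|^2q_j+u$; for $i=1,\dots,n$: $\hat q_iM_{i0}\ddot x+M_{ii}\dot\omega_i-\sum_{j\neq i}M_{ij}\hat q_i\hat q_j\dot\omega_j=\sum_{j\neq i}M_{ij}\|\omega_j\|^2\hat q_iq_j+\big(\sum_{a=i}^n m_a\big)g\,l_i\,\hat q_ie_3$; and $\dot q_i=\omega_i\times q_i$. *)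

theory Defs
  imports "HOL-Analysis.Analysis"
begin

definition e1 :: "real^3" where "e1 = axis 1 1"
definition e2 :: "real^3" where "e2 = axis 2 1"
definition e3 :: "real^3" where "e3 = axis 3 1"

text \<open>C = [e1, e2], a 3x2 matrix (rows indexed by 3, columns by 2).\<close>
definition Cmat :: "real^2^3" where
  "Cmat = (\<chi> i j. if (i = 1 \<and> j = 1) \<or> (i = 2 \<and> j = 2) then 1 else 0)"

definition hat :: "real^3 \<Rightarrow> real^3^3" where
  "hat y = matrix (\<lambda>z. cross3 y z)"

fun mpow :: "real^3^3 \<Rightarrow> nat \<Rightarrow> real^3^3" where
  "mpow A 0 = mat 1"
| "mpow A (Suc k) = A ** mpow A k"

definition mexp :: "real^3^3 \<Rightarrow> real^3^3" where
  "mexp A = (\<Sum>k. (1 / fact k) *\<^sub>R mpow A k)"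

text \<open>m0: cart mass; m i, l i (i = 1..n): link point masses and lengths.\<close>
definition Msum :: "nat \<Rightarrow> (nat \<Rightarrow> real) \<Rightarrow> nat \<Rightarrow> real" where
  "Msum n m i = (\<Sum>a = i..n. m a)"

definition M00 :: "nat \<Rightarrow> real \<Rightarrow> (nat \<Rightarrow> real) \<Rightarrow> real" where
  "M00 n m0 m = m0 + (\<Sum>i = 1..n. m i)"

definition M0 :: "nat \<Rightarrow> (nat \<Rightarrow> real) \<Rightarrow> (nat \<Rightarrow> real) \<Rightarrow> nat \<Rightarrow> real^3^2" where
  "M0 n m l i = (Msum n m i * l i) *\<^sub>R transpose Cmat"

definition Mi0 :: "nat \<Rightarrow> (nat \<Rightarrow> real) \<Rightarrow> (nat \<Rightarrow> real) \<Rightarrow> nat \<Rightarrow> real^2^3" where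
  "Mi0 n m l i = transpose (M0 n m l i)"

definition Mij :: "nat \<Rightarrow> (nat \<Rightarrow> real) \<Rightarrow> (nat \<Rightarrow> real) \<Rightarrow> nat \<Rightarrow> nat \<Rightarrow> real" where
  "Mij n m l i j = Msum n m (max i j) * l i * l j"

text \<open>Cart equation: arguments are the values at one time instant of
  xdd (= second derivative of x), q, omega, omegad (= derivative of omega), u.\<close>
definition res_cart ::
  "nat \<Rightarrow> real \<Rightarrow> (nat \<Rightarrow> real) \<Rightarrow> (nat \<Rightarrow> real) \<Rightarrow>
   real^2 \<Rightarrow> (nat \<Rightarrow> real^3) \<Rightarrow> (nat \<Rightarrow> real^3) \<Rightarrow> (nat \<Rightarrow> real^3) \<Rightarrow> real^2 \<Rightarrow> real^2" where
  "res_cart n m0 m l xdd q w wd u =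
     M00 n m0 m *\<^sub>R xdd - (\<Sum>j = 1..n. M0 n m l j *v (hat (q j) *v wd j))
     - ((\<Sum>j = 1..n. (norm (w j))\<^sup>2 *\<^sub>R (M0 n m l j *v q j)) + u)"

definition res_link ::
  "nat \<Rightarrow> (nat \<Rightarrow> real) \<Rightarrow> (nat \<Rightarrow> real) \<Rightarrow> real \<Rightarrow> nat \<Rightarrow>
   real^2 \<Rightarrow> (nat \<Rightarrow> real^3) \<Rightarrow> (nat \<Rightarrow> real^3) \<Rightarrow> (nat \<Rightarrow> real^3) \<Rightarrow> real^3" where
  "res_link n m l g i xdd q w wd =
     hat (q i) *v (Mi0 n m l i *v xdd) + Mij n m l i i *\<^sub>R wd i
     - (\<Sum>j \<in> {1..n} - {i}. Mij n m l i j *\<^sub>R (hat (q i) *v (hat (q j) *v wd j)))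
     - ((\<Sum>j \<in> {1..n} - {i}. (Mij n m l i j * (norm (w j))\<^sup>2) *\<^sub>R (hat (q i) *v q j))
        + (Msum n m i * g * l i) *\<^sub>R (hat (q i) *v e3))"

definition res_kin :: "real^3 \<Rightarrow> real^3 \<Rightarrow> real^3 \<Rightarrow> real^3" where
  "res_kin qd w q = qd - cross3 w q"

text \<open>Block row/column 0 corresponds to delta x, block i (1..n) to C^T xi_i.\<close>
definition Mblk :: "nat \<Rightarrow> real \<Rightarrow> (nat \<Rightarrow> real) \<Rightarrow> (nat \<Rightarrow> real) \<Rightarrow> (nat \<Rightarrow> real)
                    \<Rightarrow> nat \<Rightarrow> nat \<Rightarrow> real^2^2" where
  "Mblk n m0 m l s r c =
     (if r = 0 \<and> c = 0 then M00 n m0 m *\<^sub>R mat 1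
      else if r = 0 then (- s c) *\<^sub>R (M0 n m l c ** hat e3 ** Cmat)
      else if c = 0 then transpose ((- s r) *\<^sub>R (M0 n m l r ** hat e3 ** Cmat))
      else (s r * s c * Mij n m l r c) *\<^sub>R mat 1)"

definition Gblk :: "nat \<Rightarrow> (nat \<Rightarrow> real) \<Rightarrow> (nat \<Rightarrow> real) \<Rightarrow> (nat \<Rightarrow> real) \<Rightarrow> real
                    \<Rightarrow> nat \<Rightarrow> nat \<Rightarrow> real^2^2" where
  "Gblk n m l s g r c =
     (if r = c \<and> r \<noteq> 0 then (s r * Msum n m r * g * l r) *\<^sub>R mat 1 else 0)"

definition Bblk :: "nat \<Rightarrow> real^2^2" where
  "Bblk r = (if r = 0 then mat 1 else 0)"

definition Xe :: "(real \<Rightarrow> real^2) \<Rightarrow> real \<Rightarrow> real \<Rightarrow> real^2" where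
  "Xe dx \<epsilon> t = \<epsilon> *\<^sub>R dx t"

definition Qe :: "(nat \<Rightarrow> real) \<Rightarrow> (nat \<Rightarrow> real \<Rightarrow> real^3) \<Rightarrow> real \<Rightarrow> nat \<Rightarrow> real \<Rightarrow> real^3" where
  "Qe s xi \<epsilon> i t = mexp (\<epsilon> *\<^sub>R hat (xi i t)) *v (s i *\<^sub>R e3)"

definition We :: "(nat \<Rightarrow> real \<Rightarrow> real^3) \<Rightarrow> real \<Rightarrow> nat \<Rightarrow> real \<Rightarrow> real^3" where
  "We dw \<epsilon> i t = \<epsilon> *\<^sub>R dw i t"

definition Ue :: "(real \<Rightarrow> real^2) \<Rightarrow> real \<Rightarrow> real \<Rightarrow> real^2" where
  "Ue du \<epsilon> t = \<epsilon> *\<^sub>R du t"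

definition R_cart where
  "R_cart n m0 m l s dx xi dw du \<epsilon> t =
     res_cart n m0 m l
       (vector_derivative (\<lambda>\<tau>. vector_derivative (\<lambda>\<sigma>. Xe dx \<epsilon> \<sigma>) (at \<tau>)) (at t))
       (\<lambda>j. Qe s xi \<epsilon> j t) (\<lambda>j. We dw \<epsilon> j t)
       (\<lambda>j. vector_derivative (\<lambda>\<tau>. We dw \<epsilon> j \<tau>) (at t))
       (Ue du \<epsilon> t)"

definition R_link where
  "R_link n m l g s dx xi dw \<epsilon> i t =
     res_link n m l g i
       (vector_derivative (\<lambda>\<tau>. vector_derivative (\<lambda>\<sigma>. Xe dx \<epsilon> \<sigma>) (at \<tau>)) (at t))
       (\<lambda>j. Qe s xi \<epsilon> j t) (\<lambda>j. We dw \<epsilon> j t)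
       (\<lambda>j. vector_derivative (\<lambda>\<tau>. We dw \<epsilon> j \<tau>) (at t))"

definition R_kin where
  "R_kin s xi dw \<epsilon> i t =
     res_kin (vector_derivative (\<lambda>\<tau>. Qe s xi \<epsilon> i \<tau>) (at t)) (We dw \<epsilon> i t) (Qe s xi \<epsilon> i t)"

end

theory Submission
  imports Defs
begin

text \<open>
  Along the perturbation, \<open>q\<^sub>i(\<epsilon>) = exp(\<epsilon> hat \<xi>\<^sub>i) s\<^sub>i e\<^sub>3\<close> is an everywhere convergent power series in
  \<open>\<epsilon>\<close> whose coefficients are the iterated cross products \<open>(\<xi>\<^sub>i \<times>)\<^sup>k s\<^sub>i e\<^sub>3 / k!\<close>; its time derivative
  is obtained by termwise differentiation, the series of derivatives converging locally uniformly in
  time. Hence \<open>q\<^sub>i(0) = s\<^sub>i e\<^sub>3\<close>, \<open>\<partial>\<^sub>\<epsilon> q\<^sub>i(0) = \<xi>\<^sub>i \<times> s\<^sub>i e\<^sub>3\<close> and \<open>\<partial>\<^sub>\<epsilon> \<partial>\<^sub>t q\<^sub>i(0) = \<xi>'\<^sub>i \<times> s\<^sub>i e\<^sub>3\<close>, while every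
  other factor of the residuals is linear or quadratic in \<open>\<epsilon>\<close>, so the \<open>\<epsilon>\<close>-derivatives of the residuals
  at \<open>0\<close> are explicit. The kinematic one vanishes iff \<open>\<delta>\<omega>\<^sub>i = \<xi>'\<^sub>i\<close>, both vectors being orthogonal to
  \<open>e\<^sub>3\<close>; then \<open>\<delta>\<omega>'\<^sub>i = \<xi>''\<^sub>i\<close>. Since \<open>e\<^sub>3 \<times> (e\<^sub>3 \<times> z) = -z\<close> for \<open>z \<bottom> e\<^sub>3\<close> and \<open>C\<close> is injective, mapping the
  horizontal link equations by \<open>C\<close> turns the cart and link equations into the block rows of
  \<open>M x'' + G x = B u\<close>.
\<close>

lemma hat_mult_vec: "hat y *v z = cross3 y z"
  by (simp add: hat_def matrix_def matrix_vector_mult_def cross3_def vec_eq_iff forall_3 sum_3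
      axis_def vector_def)

lemma norm_cross3_le: "norm (cross3 x y) \<le> norm x * norm y"
proof (rule power2_le_imp_le)
  show "(norm (cross3 x y))\<^sup>2 \<le> (norm x * norm y)\<^sup>2"
    using norm_cross_dot[of x y] zero_le_power2[of "x \<bullet> y"] by linarith
qed simp

lemma has_vector_derivative_cross3[derivative_intros]:
  "(f has_vector_derivative f') (at x within S) \<Longrightarrow> (g has_vector_derivative g') (at x within S) \<Longrightarrow>
   ((\<lambda>x. cross3 (f x) (g x)) has_vector_derivative cross3 (f x) g' + cross3 f' (g x)) (at x within S)"
  using bilinear_conv_bounded_bilinear bilinear_cross bounded_bilinear.has_vector_derivative by blast

lemma has_vector_derivative_matrix_vector_mult[derivative_intros]:
  "(f has_vector_derivative f') F \<Longrightarrow> ((\<lambda>x. (A::real^'n^'m) *v f x) has_vector_derivative A *v f') F"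
  by (rule bounded_linear.has_vector_derivative[OF matrix_vector_mul_bounded_linear])

lemma has_vector_derivative_scaleR_right[derivative_intros]:
  "(f has_vector_derivative f') F \<Longrightarrow> ((\<lambda>x. c *\<^sub>R f x) has_vector_derivative c *\<^sub>R f') F"
  by (rule bounded_linear.has_vector_derivative[OF bounded_linear_scaleR_right])

lemma vector_derivative_scaleR_at:
  "(f has_vector_derivative f') (at t) \<Longrightarrow> vector_derivative (\<lambda>\<tau>. c *\<^sub>R f \<tau>) (at t) = c *\<^sub>R f'"
  by (rule vector_derivative_at[OF has_vector_derivative_scaleR_right])

lemma has_vector_derivative_id_scaleR: "((\<lambda>\<epsilon>. \<epsilon> *\<^sub>R v) has_vector_derivative v) (at x within S)"
  using has_vector_derivative_scaleR[OF DERIV_ident has_vector_derivative_const[of v]] by simp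

lemma has_vector_derivative_square_scaleR_at_0:
  "((\<lambda>\<epsilon>. (\<epsilon>\<^sup>2 * c) *\<^sub>R f \<epsilon>) has_vector_derivative 0) (at 0)"
  if "(f has_vector_derivative f') (at 0)"
proof -
  have "((\<lambda>\<epsilon>. \<epsilon>\<^sup>2 * c) has_real_derivative 0) (at 0)" by (auto intro!: derivative_eq_intros)
  from has_vector_derivative_scaleR[OF this that] show ?thesis by simp
qed

lemma has_vector_derivative_orthogonal:
  assumes "\<And>\<tau>. f \<tau> \<bullet> v = 0" and "(f has_vector_derivative f') (at t)"
  shows "f' \<bullet> v = 0"
proof -
  have "((\<lambda>\<tau>. f \<tau> \<bullet> v) has_vector_derivative f' \<bullet> v) (at t)"
    by (rule bounded_linear.has_vector_derivative[OF bounded_linear_inner_left assms(2)])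
  then show ?thesis
    using assms(1) vector_derivative_unique_at[OF _ has_vector_derivative_const] by simp
qed

fun iter_cross :: "real^3 \<Rightarrow> nat \<Rightarrow> real^3 \<Rightarrow> real^3" where
  "iter_cross y 0 v = v"
| "iter_cross y (Suc k) v = cross3 y (iter_cross y k v)"

fun iter_cross_deriv :: "real^3 \<Rightarrow> real^3 \<Rightarrow> nat \<Rightarrow> real^3 \<Rightarrow> real^3" where
  "iter_cross_deriv y y' 0 v = 0"
| "iter_cross_deriv y y' (Suc k) v = cross3 y' (iter_cross y k v) + cross3 y (iter_cross_deriv y y' k v)"

lemma has_vector_derivative_iter_cross:
  assumes "(y has_vector_derivative y') (at x within S)"
  shows "((\<lambda>\<tau>. iter_cross (y \<tau>) k v) has_vector_derivative iter_cross_deriv (y x) y' k v) (at x within S)"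
  by (induction k) (auto intro!: derivative_eq_intros assms simp: add.commute)

lemma norm_iter_cross_le: "norm (iter_cross y k v) \<le> norm y ^ k * norm v"
proof (induction k)
  case (Suc k)
  have "norm (iter_cross y (Suc k) v) \<le> norm y * norm (iter_cross y k v)"
    using norm_cross3_le by simp
  also have "\<dots> \<le> norm y * (norm y ^ k * norm v)"
    using Suc by (simp add: mult_left_mono)
  finally show ?case by (simp add: mult.assoc)
qed simp

lemma norm_iter_cross_deriv_le:
  assumes "norm y \<le> K" and "norm y' \<le> K"
  shows "norm (iter_cross_deriv y y' k v) \<le> (2 * K) ^ k * norm v"
proof -
  have K: "K \<ge> 0" using assms(1) norm_ge_zero order_trans by blast
  have "norm (iter_cross_deriv y y' k v) \<le> k * K ^ k * norm v"
  proof (induction k)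
    case (Suc k)
    have "norm (iter_cross_deriv y y' (Suc k) v)
        \<le> norm y' * norm (iter_cross y k v) + norm y * norm (iter_cross_deriv y y' k v)"
      using norm_cross3_le by (simp add: norm_triangle_le add_mono)
    also have "\<dots> \<le> K * (K ^ k * norm v) + K * (k * K ^ k * norm v)"
    proof -
      have "norm (iter_cross y k v) \<le> K ^ k * norm v"
        using norm_iter_cross_le[of y k v] power_mono[OF assms(1), of k]
        by (meson mult_right_mono norm_ge_zero order_trans)
      then show ?thesis using assms K Suc by (intro add_mono mult_mono) auto
    qed
    also have "\<dots> = Suc k * K ^ Suc k * norm v" by (simp add: algebra_simps)
    finally show ?case .
  qed simp
  also have "\<dots> \<le> 2 ^ k * K ^ k * norm v"
    using K by (intro mult_right_mono) (auto intro: less_imp_le)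
  finally show ?thesis by (simp add: power_mult_distrib)
qed

section \<open>Termwise differentiation of series\<close>

lemma summable_exp_coeffs:
  fixes b :: "nat \<Rightarrow> 'a::real_normed_vector"
  assumes "\<And>k. norm (b k) \<le> C * K ^ k"
  shows "summable (\<lambda>k. norm ((c ^ k / fact k) *\<^sub>R b k))"
proof (rule summable_comparison_test')
  show "summable (\<lambda>k. C * ((\<bar>c\<bar> * K) ^ k / fact k))"
    using summable_mult[OF summable_exp[of "\<bar>c\<bar> * K"], of C] by (simp add: field_simps)
  show "norm (norm ((c ^ k / fact k) *\<^sub>R b k)) \<le> C * ((\<bar>c\<bar> * K) ^ k / fact k)" for k
    using mult_left_mono[OF assms[of k], of "\<bar>c\<bar> ^ k / fact k"]
    by (simp add: power_abs power_mult_distrib field_simps)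
qed

lemma has_vector_derivative_series:
  fixes f f' :: "nat \<Rightarrow> real \<Rightarrow> 'a::banach"
  assumes S: "convex S" "x \<in> interior S"
    and f': "\<And>k y. y \<in> S \<Longrightarrow> (f k has_vector_derivative f' k y) (at y within S)"
    and M: "\<And>k y. y \<in> S \<Longrightarrow> norm (f' k y) \<le> M k" "summable M"
    and f: "\<And>y. y \<in> S \<Longrightarrow> summable (\<lambda>k. f k y)"
  shows "((\<lambda>y. \<Sum>k. f k y) has_vector_derivative (\<Sum>k. f' k x)) (at x)"
proof -
  have xS: "x \<in> S" using S(2) interior_subset by blast
  have lim: "uniform_limit S (\<lambda>n y. \<Sum>k<n. f' k y) (\<lambda>y. \<Sum>k. f' k y) sequentially"
    by (rule Weierstrass_m_test[OF M])
  have "\<forall>\<^sub>F n in sequentially. \<forall>y\<in>S. \<forall>h. norm ((\<Sum>k<n. h *\<^sub>R f' k y) - h *\<^sub>R (\<Sum>k. f' k y))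
          \<le> \<epsilon> * norm h" if "\<epsilon> > 0" for \<epsilon>
    using uniform_limitD[OF lim that]
  proof eventually_elim
    case (elim n)
    show ?case
    proof (intro ballI allI)
      fix y h assume "y \<in> S"
      with elim have "\<bar>h\<bar> * norm ((\<Sum>k<n. f' k y) - (\<Sum>k. f' k y)) \<le> \<bar>h\<bar> * \<epsilon>"
        by (intro mult_left_mono) (auto simp: dist_norm)
      then show "norm ((\<Sum>k<n. h *\<^sub>R f' k y) - h *\<^sub>R (\<Sum>k. f' k y)) \<le> \<epsilon> * norm h"
        by (simp add: scaleR_sum_right[symmetric] scaleR_diff_right[symmetric] mult.commute)
    qed
  qed
  then have "\<exists>g. \<forall>y\<in>S. (\<lambda>k. f k y) sums g y
      \<and> (g has_derivative (\<lambda>h. h *\<^sub>R (\<Sum>k. f' k y))) (at y within S)"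
    using f' by (intro has_derivative_series[of S f "\<lambda>k y h. h *\<^sub>R f' k y", OF S(1) _ _ xS
          summable_sums[OF f[OF xS]]]) (auto simp: has_vector_derivative_def)
  then obtain g where g: "\<And>y. y \<in> S \<Longrightarrow> (\<lambda>k. f k y) sums g y"
    "\<And>y. y \<in> S \<Longrightarrow> (g has_vector_derivative (\<Sum>k. f' k y)) (at y within S)"
    unfolding has_vector_derivative_def by blast
  have "(g has_vector_derivative (\<Sum>k. f' k x)) (at x)"
    using g(2)[OF xS] by (simp add: at_within_interior[OF S(2)])
  then show ?thesis
  proof (rule has_vector_derivative_transform_within_open[OF _ open_interior S(2)])
    show "g y = (\<Sum>k. f k y)" if "y \<in> interior S" for y
      using g(1) that interior_subset sums_unique by blast
  qed
qed

lemma suminf_powser_at_0: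
  fixes a :: "nat \<Rightarrow> 'a::real_normed_vector"
  shows "(\<Sum>k. (0::real) ^ k *\<^sub>R a k) = a 0"
proof -
  have "(\<lambda>k. (0::real) ^ k *\<^sub>R a k) = (\<lambda>k. if k = 0 then a k else 0)"
    by (auto simp: fun_eq_iff)
  then show ?thesis using sums_unique[OF sums_single[of 0 a]] by simp
qed

lemma has_vector_derivative_powser_at_0:
  fixes a :: "nat \<Rightarrow> 'a::banach"
  assumes a: "summable (\<lambda>k. norm (a k))"
  shows "((\<lambda>e. \<Sum>k. e ^ k *\<^sub>R a k) has_vector_derivative a 1) (at 0)"
proof -
  \<comment> \<open>on \<open>\<bar>e\<bar> \<le> 1/2\<close> the differentiated series is dominated by \<open>2 \<parallel>a k\<parallel>\<close>, as \<open>k \<le> 2\<^sup>k\<close>\<close>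
  define S where "S = cball (0::real) (1/2)"
  have "((\<lambda>e. \<Sum>k. e ^ k *\<^sub>R a k) has_vector_derivative (\<Sum>k. (real k * 0 ^ (k - 1)) *\<^sub>R a k)) (at 0)"
  proof (rule has_vector_derivative_series)
    show "convex S" "0 \<in> interior S" by (simp_all add: S_def)
    show "((\<lambda>e. e ^ k *\<^sub>R a k) has_vector_derivative (real k * y ^ (k - 1)) *\<^sub>R a k) (at y within S)"
      for k y by (auto intro!: derivative_eq_intros)
    show "norm ((real k * y ^ (k - 1)) *\<^sub>R a k) \<le> 2 * norm (a k)" if "y \<in> S" for k y
    proof (cases k)
      case (Suc j)
      have "\<bar>y\<bar> ^ j \<le> (1/2) ^ j" using that by (intro power_mono) (auto simp: S_def)
      then have "Suc j * \<bar>y\<bar> ^ j \<le> Suc j * (1/2) ^ j" by (intro mult_left_mono) auto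
      also have "\<dots> \<le> 2" using of_nat_less_two_power[of "Suc j", where 'a=real]
        by (simp add: field_simps)
      finally show ?thesis using Suc by (simp add: abs_mult power_abs mult_right_mono)
    qed simp
    show "summable (\<lambda>k. 2 * norm (a k))" using a by (rule summable_mult)
    show "summable (\<lambda>k. y ^ k *\<^sub>R a k)" if "y \<in> S" for y
    proof (rule summable_comparison_test'[OF a])
      show "norm (y ^ k *\<^sub>R a k) \<le> norm (a k)" for k
        using that by (auto simp: S_def power_abs intro!: mult_left_le_one_le power_le_one)
    qed
  qed
  moreover have "(\<lambda>k. (real k * 0 ^ (k - 1)) *\<^sub>R a k) = (\<lambda>k. if k = 1 then a k else 0)"
    by (auto simp: fun_eq_iff)
  ultimately show ?thesis using sums_unique[OF sums_single[of 1 a]] by simp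
qed

section \<open>The exponential of a hat matrix applied to a vector\<close>

lemma mpow_scaleR_hat_mult_vec: "mpow (e *\<^sub>R hat y) k *v v = e ^ k *\<^sub>R iter_cross y k v"
  by (induction k) (auto simp: matrix_vector_mul_assoc[symmetric]
      scaleR_matrix_vector_assoc[symmetric] hat_mult_vec cross_mult_right)

lemma norm_matrix_le_sum_columns:
  "norm (A::real^'n^'m) \<le> (\<Sum>i::'m\<in>UNIV. \<Sum>j\<in>UNIV. norm (A *v axis j 1))"
proof -
  have "norm A \<le> (\<Sum>i\<in>UNIV. norm (A $ i))"
    unfolding norm_vec_def by (rule L2_set_le_sum) auto
  also have "\<dots> \<le> (\<Sum>i\<in>UNIV. \<Sum>j\<in>UNIV. \<bar>A $ i $ j\<bar>)"
    by (intro sum_mono norm_le_l1_cart)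
  also have "\<dots> \<le> (\<Sum>i::'m\<in>UNIV. \<Sum>j\<in>UNIV. norm (A *v axis j 1))"
  proof (rule sum_mono, rule sum_mono)
    fix i j
    have "A $ i $ j = (A *v axis j 1) $ i"
      by (simp add: matrix_vector_mult_def axis_def if_distrib cong: if_cong)
    then show "\<bar>A $ i $ j\<bar> \<le> norm (A *v axis j 1)"
      using component_le_norm_cart by metis
  qed
  finally show ?thesis .
qed

lemma bounded_linear_matrix_vector_mult_left: "bounded_linear (\<lambda>A::real^'n^'m. A *v v)"
  by (rule linear_conv_bounded_linear[THEN iffD1])
    (auto intro!: linearI simp: matrix_vector_mult_add_rdistrib scaleR_matrix_vector_assoc)

lemma mexp_scaleR_hat_mult_vec:
  "mexp (e *\<^sub>R hat y) *v v = (\<Sum>k. (e ^ k / fact k) *\<^sub>R iter_cross y k v)"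
proof -
  have "norm (mpow (e *\<^sub>R hat y) k) \<le> 9 * (\<bar>e\<bar> * norm y) ^ k" for k
  proof -
    have "norm (mpow (e *\<^sub>R hat y) k *v axis j 1) \<le> (\<bar>e\<bar> * norm y) ^ k" for j :: 3
      using mult_left_mono[OF norm_iter_cross_le[of y k "axis j 1"], of "\<bar>e\<bar> ^ k"]
      by (simp add: mpow_scaleR_hat_mult_vec power_abs power_mult_distrib)
    then have "(\<Sum>i::3\<in>UNIV. \<Sum>j\<in>UNIV. norm (mpow (e *\<^sub>R hat y) k *v axis j 1))
        \<le> (\<Sum>i::3\<in>UNIV. \<Sum>j::3\<in>UNIV. (\<bar>e\<bar> * norm y) ^ k)"
      by (intro sum_mono)
    then show ?thesis
      using norm_matrix_le_sum_columns[of "mpow (e *\<^sub>R hat y) k"] by simp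
  qed
  then have "summable (\<lambda>k. norm ((1 ^ k / fact k) *\<^sub>R mpow (e *\<^sub>R hat y) k))"
    by (rule summable_exp_coeffs)
  then have "summable (\<lambda>k. (1 / fact k) *\<^sub>R mpow (e *\<^sub>R hat y) k)"
    using summable_norm_cancel by fastforce
  then have "mexp (e *\<^sub>R hat y) *v v = (\<Sum>k. (1 / fact k) *\<^sub>R mpow (e *\<^sub>R hat y) k *v v)"
    unfolding mexp_def
    by (rule bounded_linear.suminf[OF bounded_linear_matrix_vector_mult_left])
  then show ?thesis
    by (simp add: scaleR_matrix_vector_assoc[symmetric] mpow_scaleR_hat_mult_vec)
qed

lemma has_vector_derivative_exp_series_iter_cross:
  assumes y: "\<And>\<tau>. (y has_vector_derivative y' \<tau>) (at \<tau>)" and y': "continuous_on UNIV y'"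
  shows "((\<lambda>\<tau>. \<Sum>k. (e ^ k / fact k) *\<^sub>R iter_cross (y \<tau>) k v) has_vector_derivative
           (\<Sum>k. (e ^ k / fact k) *\<^sub>R iter_cross_deriv (y t) (y' t) k v)) (at t)"
proof -
  define S where "S = cball t (1::real)"
  have "continuous_on UNIV y"
    using y continuous_at_imp_continuous_on has_vector_derivative_continuous by blast
  then have "bounded (y ` S)" "bounded (y' ` S)"
    using y' by (auto simp: S_def intro!: compact_imp_bounded compact_continuous_image
        intro: continuous_on_subset)
  then obtain K1 K2 where K1: "\<forall>\<tau>\<in>S. norm (y \<tau>) \<le> K1" and K2: "\<forall>\<tau>\<in>S. norm (y' \<tau>) \<le> K2"
    unfolding bounded_iff by auto
  define K where "K = max K1 K2"
  show ?thesis
  proof (rule has_vector_derivative_series)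
    show "convex S" "t \<in> interior S" by (simp_all add: S_def)
    show "((\<lambda>\<tau>. (e ^ k / fact k) *\<^sub>R iter_cross (y \<tau>) k v) has_vector_derivative
        (e ^ k / fact k) *\<^sub>R iter_cross_deriv (y \<tau>) (y' \<tau>) k v) (at \<tau> within S)" for k \<tau>
      using y by (intro has_vector_derivative_scaleR_right has_vector_derivative_iter_cross)
        (blast intro: has_vector_derivative_at_within)
    show "norm ((e ^ k / fact k) *\<^sub>R iter_cross_deriv (y \<tau>) (y' \<tau>) k v)
        \<le> norm v * ((\<bar>e\<bar> * (2 * K)) ^ k / fact k)" if "\<tau> \<in> S" for k \<tau>
    proof -
      have "norm (iter_cross_deriv (y \<tau>) (y' \<tau>) k v) \<le> (2 * K) ^ k * norm v"
        using K1 K2 that by (intro norm_iter_cross_deriv_le) (auto simp: K_def)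
      from mult_left_mono[OF this, of "\<bar>e\<bar> ^ k / fact k"] show ?thesis
        by (simp add: power_abs power_mult_distrib ac_simps)
    qed
    show "summable (\<lambda>k. norm v * ((\<bar>e\<bar> * (2 * K)) ^ k / fact k))"
      using summable_mult[OF summable_exp, of "norm v" "\<bar>e\<bar> * (2 * K)"] by (simp add: field_simps)
    show "summable (\<lambda>k. (e ^ k / fact k) *\<^sub>R iter_cross (y \<tau>) k v)" for \<tau>
      using summable_exp_coeffs[OF norm_iter_cross_le[of "y \<tau>" _ v, unfolded mult.commute[of _ "norm v"]]]
      by (rule summable_norm_cancel)
  qed
qed

lemma mexp_scaleR_hat_zero_mult_vec: "mexp (0 *\<^sub>R hat y) *v v = v"
  using mexp_scaleR_hat_mult_vec[of 0 y v]
    suminf_powser_at_0[of "\<lambda>k. (1 / fact k) *\<^sub>R iter_cross y k v"]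
  by simp

lemma has_vector_derivative_mexp_scaleR_hat:
  "((\<lambda>e. mexp (e *\<^sub>R hat y) *v v) has_vector_derivative cross3 y v) (at 0)"
proof -
  have "summable (\<lambda>k. norm ((1 / fact k) *\<^sub>R iter_cross y k v))"
    using summable_exp_coeffs[of "\<lambda>k. iter_cross y k v" "norm v" "norm y" 1] norm_iter_cross_le[of y _ v]
    by (simp add: mult.commute)
  then have "((\<lambda>e. \<Sum>k. e ^ k *\<^sub>R (1 / fact k) *\<^sub>R iter_cross y k v) has_vector_derivative
      (1 / fact 1) *\<^sub>R iter_cross y 1 v) (at 0)"
    by (rule has_vector_derivative_powser_at_0)
  then show ?thesis by (simp add: mexp_scaleR_hat_mult_vec)
qed

lemma has_vector_derivative_vector_derivative_mexp_scaleR_hat: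
  assumes y: "\<And>\<tau>. (y has_vector_derivative y' \<tau>) (at \<tau>)" and y': "continuous_on UNIV y'"
  shows "((\<lambda>e. vector_derivative (\<lambda>\<tau>. mexp (e *\<^sub>R hat (y \<tau>)) *v v) (at t))
           has_vector_derivative cross3 (y' t) v) (at 0)"
proof -
  define K where "K = max (norm (y t)) (norm (y' t))"
  have "norm (iter_cross_deriv (y t) (y' t) k v) \<le> norm v * (2 * K) ^ k" for k
    using norm_iter_cross_deriv_le[of "y t" K "y' t" k v] by (simp add: K_def mult.commute)
  then have "summable (\<lambda>k. norm ((1 / fact k) *\<^sub>R iter_cross_deriv (y t) (y' t) k v))"
    using summable_exp_coeffs[of "\<lambda>k. iter_cross_deriv (y t) (y' t) k v" "norm v" "2 * K" 1] by simp
  then have "((\<lambda>e. \<Sum>k. e ^ k *\<^sub>R (1 / fact k) *\<^sub>R iter_cross_deriv (y t) (y' t) k v)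
      has_vector_derivative (1 / fact 1) *\<^sub>R iter_cross_deriv (y t) (y' t) 1 v) (at 0)"
    by (rule has_vector_derivative_powser_at_0)
  moreover have "vector_derivative (\<lambda>\<tau>. mexp (e *\<^sub>R hat (y \<tau>)) *v v) (at t)
      = (\<Sum>k. (e ^ k / fact k) *\<^sub>R iter_cross_deriv (y t) (y' t) k v)" for e
    unfolding mexp_scaleR_hat_mult_vec
    by (rule vector_derivative_at[OF has_vector_derivative_exp_series_iter_cross[OF y y']])
  ultimately show ?thesis by simp
qed

section \<open>Derivatives of the residuals at the equilibrium\<close>

lemma Qe_zero: "Qe s xi 0 i t = s i *\<^sub>R e3"
  unfolding Qe_def by (rule mexp_scaleR_hat_zero_mult_vec)

lemma has_vector_derivative_Qe: "((\<lambda>\<epsilon>. Qe s xi \<epsilon> i t) has_vector_derivative cross3 (xi i t) (s i *\<^sub>R e3)) (at 0)"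
  unfolding Qe_def by (rule has_vector_derivative_mexp_scaleR_hat)

lemma has_vector_derivative_vector_derivative_Qe:
  assumes "\<And>\<tau>. (xi i has_vector_derivative y' \<tau>) (at \<tau>)" and "continuous_on UNIV y'"
  shows "((\<lambda>\<epsilon>. vector_derivative (\<lambda>\<tau>. Qe s xi \<epsilon> i \<tau>) (at t)) has_vector_derivative
           cross3 (y' t) (s i *\<^sub>R e3)) (at 0)"
  unfolding Qe_def by (rule has_vector_derivative_vector_derivative_mexp_scaleR_hat[OF assms])

lemma second_derivative_Xe:
  assumes "\<forall>t. (dx has_vector_derivative dx' t) (at t)" "\<forall>t. (dx' has_vector_derivative dx'' t) (at t)"
  shows "vector_derivative (\<lambda>\<tau>. vector_derivative (\<lambda>\<sigma>. Xe dx \<epsilon> \<sigma>) (at \<tau>)) (at t) = \<epsilon> *\<^sub>R dx'' t"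
proof -
  have "vector_derivative (\<lambda>\<sigma>. Xe dx \<epsilon> \<sigma>) (at \<tau>) = \<epsilon> *\<^sub>R dx' \<tau>" for \<tau>
    using assms(1) by (simp add: Xe_def vector_derivative_scaleR_at)
  then show ?thesis using assms(2) by (simp add: vector_derivative_scaleR_at)
qed

lemma vector_derivative_We:
  "(dw i has_vector_derivative dw' i t) (at t) \<Longrightarrow>
   vector_derivative (\<lambda>\<tau>. We dw \<epsilon> i \<tau>) (at t) = \<epsilon> *\<^sub>R dw' i t"
  unfolding We_def by (rule vector_derivative_scaleR_at)

definition lin_res_cart ::
  "nat \<Rightarrow> real \<Rightarrow> (nat \<Rightarrow> real) \<Rightarrow> (nat \<Rightarrow> real) \<Rightarrow> (nat \<Rightarrow> real) \<Rightarrow>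
   real^2 \<Rightarrow> (nat \<Rightarrow> real^3) \<Rightarrow> real^2 \<Rightarrow> real^2" where
  "lin_res_cart n m0 m l s x'' w' u =
     M00 n m0 m *\<^sub>R x'' - (\<Sum>j = 1..n. M0 n m l j *v cross3 (s j *\<^sub>R e3) (w' j)) - u"

definition lin_res_link ::
  "nat \<Rightarrow> (nat \<Rightarrow> real) \<Rightarrow> (nat \<Rightarrow> real) \<Rightarrow> real \<Rightarrow> (nat \<Rightarrow> real) \<Rightarrow> nat \<Rightarrow>
   real^2 \<Rightarrow> (nat \<Rightarrow> real^3) \<Rightarrow> real^3 \<Rightarrow> real^3" where
  "lin_res_link n m l g s i x'' w' \<xi> =
     cross3 (s i *\<^sub>R e3) (Mi0 n m l i *v x'') + Mij n m l i i *\<^sub>R w' i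
     - (\<Sum>j \<in> {1..n} - {i}. Mij n m l i j *\<^sub>R cross3 (s i *\<^sub>R e3) (cross3 (s j *\<^sub>R e3) (w' j)))
     - (Msum n m i * g * l i) *\<^sub>R cross3 (cross3 \<xi> (s i *\<^sub>R e3)) e3"

definition lin_res_kin :: "real \<Rightarrow> real^3 \<Rightarrow> real^3 \<Rightarrow> real^3" where
  "lin_res_kin \<sigma> \<xi>' w = cross3 \<xi>' (\<sigma> *\<^sub>R e3) - cross3 w (\<sigma> *\<^sub>R e3)"

lemma has_vector_derivative_R_cart:
  assumes ddx: "\<forall>t. (dx has_vector_derivative dx' t) (at t)"
    and ddx': "\<forall>t. (dx' has_vector_derivative dx'' t) (at t)"
    and ddw: "\<forall>i\<in>{1..n}. \<forall>t. (dw i has_vector_derivative dw' i t) (at t)"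
  shows "((\<lambda>\<epsilon>. R_cart n m0 m l s dx xi dw du \<epsilon> t) has_vector_derivative
           lin_res_cart n m0 m l s (dx'' t) (\<lambda>j. dw' j t) (du t)) (at 0)"
proof -
  have dW: "vector_derivative (\<lambda>\<tau>. We dw \<epsilon> j \<tau>) (at t) = \<epsilon> *\<^sub>R dw' j t" if "j \<in> {1..n}" for j \<epsilon>
    using ddw that by (simp add: vector_derivative_We)
  have "R_cart n m0 m l s dx xi dw du \<epsilon> t = M00 n m0 m *\<^sub>R (\<epsilon> *\<^sub>R dx'' t)
       - (\<Sum>j = 1..n. M0 n m l j *v cross3 (Qe s xi \<epsilon> j t) (\<epsilon> *\<^sub>R dw' j t))
       - ((\<Sum>j = 1..n. (\<epsilon>\<^sup>2 * (norm (dw j t))\<^sup>2) *\<^sub>R (M0 n m l j *v Qe s xi \<epsilon> j t)) + \<epsilon> *\<^sub>R du t)"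
    for \<epsilon>
    unfolding R_cart_def res_cart_def second_derivative_Xe[OF ddx ddx'] Ue_def
    by (intro arg_cong2[where f="(-)"] arg_cong2[where f="(+)"] refl sum.cong)
      (auto simp: dW hat_mult_vec We_def power_mult_distrib)
  moreover have "((\<lambda>\<epsilon>. M00 n m0 m *\<^sub>R (\<epsilon> *\<^sub>R dx'' t)
       - (\<Sum>j = 1..n. M0 n m l j *v cross3 (Qe s xi \<epsilon> j t) (\<epsilon> *\<^sub>R dw' j t))
       - ((\<Sum>j = 1..n. (\<epsilon>\<^sup>2 * (norm (dw j t))\<^sup>2) *\<^sub>R (M0 n m l j *v Qe s xi \<epsilon> j t)) + \<epsilon> *\<^sub>R du t))
      has_vector_derivative lin_res_cart n m0 m l s (dx'' t) (\<lambda>j. dw' j t) (du t)) (at 0)"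
    unfolding lin_res_cart_def
    by (rule derivative_eq_intros has_vector_derivative_id_scaleR has_vector_derivative_Qe
        has_vector_derivative_square_scaleR_at_0 refl | simp add: Qe_zero)+
  ultimately show ?thesis by simp
qed

lemma has_vector_derivative_R_link:
  assumes ddx: "\<forall>t. (dx has_vector_derivative dx' t) (at t)"
    and ddx': "\<forall>t. (dx' has_vector_derivative dx'' t) (at t)"
    and ddw: "\<forall>i\<in>{1..n}. \<forall>t. (dw i has_vector_derivative dw' i t) (at t)"
    and i: "i \<in> {1..n}"
  shows "((\<lambda>\<epsilon>. R_link n m l g s dx xi dw \<epsilon> i t) has_vector_derivative
           lin_res_link n m l g s i (dx'' t) (\<lambda>j. dw' j t) (xi i t)) (at 0)"
proof -
  have dW: "vector_derivative (\<lambda>\<tau>. We dw \<epsilon> j \<tau>) (at t) = \<epsilon> *\<^sub>R dw' j t" if "j \<in> {1..n}" for j \<epsilon>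
    using ddw that by (simp add: vector_derivative_We)
  have "R_link n m l g s dx xi dw \<epsilon> i t =
       cross3 (Qe s xi \<epsilon> i t) (Mi0 n m l i *v (\<epsilon> *\<^sub>R dx'' t)) + Mij n m l i i *\<^sub>R (\<epsilon> *\<^sub>R dw' i t)
       - (\<Sum>j \<in> {1..n} - {i}. Mij n m l i j *\<^sub>R
            cross3 (Qe s xi \<epsilon> i t) (cross3 (Qe s xi \<epsilon> j t) (\<epsilon> *\<^sub>R dw' j t)))
       - ((\<Sum>j \<in> {1..n} - {i}. (\<epsilon>\<^sup>2 * (Mij n m l i j * (norm (dw j t))\<^sup>2)) *\<^sub>R
            cross3 (Qe s xi \<epsilon> i t) (Qe s xi \<epsilon> j t))
          + (Msum n m i * g * l i) *\<^sub>R cross3 (Qe s xi \<epsilon> i t) e3)" for \<epsilon>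
    unfolding R_link_def res_link_def second_derivative_Xe[OF ddx ddx']
    by (intro arg_cong2[where f="(-)"] arg_cong2[where f="(+)"] refl sum.cong)
      (auto simp: dW dW[OF i] hat_mult_vec We_def power_mult_distrib)
  moreover have "((\<lambda>\<epsilon>. cross3 (Qe s xi \<epsilon> i t) (Mi0 n m l i *v (\<epsilon> *\<^sub>R dx'' t))
       + Mij n m l i i *\<^sub>R (\<epsilon> *\<^sub>R dw' i t)
       - (\<Sum>j \<in> {1..n} - {i}. Mij n m l i j *\<^sub>R
            cross3 (Qe s xi \<epsilon> i t) (cross3 (Qe s xi \<epsilon> j t) (\<epsilon> *\<^sub>R dw' j t)))
       - ((\<Sum>j \<in> {1..n} - {i}. (\<epsilon>\<^sup>2 * (Mij n m l i j * (norm (dw j t))\<^sup>2)) *\<^sub>R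
            cross3 (Qe s xi \<epsilon> i t) (Qe s xi \<epsilon> j t))
          + (Msum n m i * g * l i) *\<^sub>R cross3 (Qe s xi \<epsilon> i t) e3))
      has_vector_derivative lin_res_link n m l g s i (dx'' t) (\<lambda>j. dw' j t) (xi i t)) (at 0)"
    unfolding lin_res_link_def
    by (rule derivative_eq_intros has_vector_derivative_id_scaleR has_vector_derivative_Qe
        has_vector_derivative_square_scaleR_at_0 refl | simp add: Qe_zero)+
  ultimately show ?thesis by simp
qed

lemma has_vector_derivative_R_kin:
  assumes dxi: "\<forall>i\<in>{1..n}. \<forall>t. (xi i has_vector_derivative xi' i t) (at t)"
    and dxi': "\<forall>i\<in>{1..n}. \<forall>t. (xi' i has_vector_derivative xi'' i t) (at t)"
    and i: "i \<in> {1..n}"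
  shows "((\<lambda>\<epsilon>. R_kin s xi dw \<epsilon> i t) has_vector_derivative
           lin_res_kin (s i) (xi' i t) (dw i t)) (at 0)"
proof -
  have "\<And>\<tau>. (xi i has_vector_derivative xi' i \<tau>) (at \<tau>)" using dxi i by blast
  moreover have "continuous_on UNIV (xi' i)"
    using dxi' i continuous_at_imp_continuous_on has_vector_derivative_continuous by blast
  ultimately have dQ: "((\<lambda>\<epsilon>. vector_derivative (\<lambda>\<tau>. Qe s xi \<epsilon> i \<tau>) (at t)) has_vector_derivative
      cross3 (xi' i t) (s i *\<^sub>R e3)) (at 0)"
    by (rule has_vector_derivative_vector_derivative_Qe)
  have "R_kin s xi dw \<epsilon> i t = vector_derivative (\<lambda>\<tau>. Qe s xi \<epsilon> i \<tau>) (at t)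
      - cross3 (\<epsilon> *\<^sub>R dw i t) (Qe s xi \<epsilon> i t)" for \<epsilon>
    unfolding R_kin_def res_kin_def We_def ..
  moreover have "((\<lambda>\<epsilon>. vector_derivative (\<lambda>\<tau>. Qe s xi \<epsilon> i \<tau>) (at t)
      - cross3 (\<epsilon> *\<^sub>R dw i t) (Qe s xi \<epsilon> i t))
      has_vector_derivative lin_res_kin (s i) (xi' i t) (dw i t)) (at 0)"
    unfolding lin_res_kin_def
    by (rule derivative_eq_intros dQ has_vector_derivative_id_scaleR has_vector_derivative_Qe refl
        | simp add: Qe_zero)+
  ultimately show ?thesis by simp
qed

section \<open>Block form of the linearized equations\<close>

definition linearized_row ::
  "nat \<Rightarrow> real \<Rightarrow> (nat \<Rightarrow> real) \<Rightarrow> (nat \<Rightarrow> real) \<Rightarrow> (nat \<Rightarrow> real) \<Rightarrow> real \<Rightarrow>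
   real^2 \<Rightarrow> (nat \<Rightarrow> real^3) \<Rightarrow> real^2 \<Rightarrow> (nat \<Rightarrow> real^3) \<Rightarrow> real^2 \<Rightarrow> nat \<Rightarrow> bool" where
  "linearized_row n m0 m l s g x'' \<xi>'' x \<xi> u r \<longleftrightarrow>
     (\<Sum>c = 0..n. Mblk n m0 m l s r c *v (if c = 0 then x'' else transpose Cmat *v \<xi>'' c))
     + (\<Sum>c = 0..n. Gblk n m l s g r c *v (if c = 0 then x else transpose Cmat *v \<xi> c))
     = Bblk r *v u"

lemmas cartesian_simps = vec_eq_iff forall_3 forall_2 matrix_vector_mult_def matrix_matrix_mult_def
  transpose_def sum_2 sum_3 Cmat_def hat_def matrix_def cross3_def e3_def axis_def vector_def

lemma inner_e3: "z \<bullet> e3 = z $ 3"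
  by (simp add: e3_def inner_axis)

lemma cross3_cross3_e3_right: "z \<bullet> e3 = 0 \<Longrightarrow> cross3 (cross3 z e3) e3 = - z"
  unfolding inner_e3 by (simp add: cartesian_simps)

lemma cross3_e3_cross3_e3: "z \<bullet> e3 = 0 \<Longrightarrow> cross3 e3 (cross3 e3 z) = - z"
  unfolding inner_e3 by (simp add: cartesian_simps)

lemma Cmat_transpose_Cmat_mult_vec: "z \<bullet> e3 = 0 \<Longrightarrow> Cmat *v (transpose Cmat *v z) = z"
  unfolding inner_e3 by (simp add: cartesian_simps)

lemma Cmat_mult_vec_eq_0_iff: "Cmat *v (w::real^2) = 0 \<longleftrightarrow> w = 0"
  by (simp add: cartesian_simps)

lemma lin_res_kin_eq_0_iff:
  "\<sigma> \<noteq> 0 \<Longrightarrow> a \<bullet> e3 = 0 \<Longrightarrow> b \<bullet> e3 = 0 \<Longrightarrow> lin_res_kin \<sigma> a b = 0 \<longleftrightarrow> b = a"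
  unfolding inner_e3 lin_res_kin_def by (auto simp: cartesian_simps)

lemma scaleR_mat_1_mult_vec: "(k *\<^sub>R mat 1) *v (x::real^'n) = k *\<^sub>R x"
  by (simp add: scaleR_matrix_vector_assoc[symmetric])

lemma matrix_vector_mult_sum: "(A::real^'n^'m) *v (\<Sum>i\<in>I. f i) = (\<Sum>i\<in>I. A *v f i)"
  by (induction I rule: infinite_finite_induct) (auto simp: matrix_vector_right_distrib)

lemma Cmat_mult_Mblk_col_0:
  "r \<noteq> 0 \<Longrightarrow> Cmat *v (Mblk n m0 m l s r 0 *v x) = cross3 (s r *\<^sub>R e3) (Mi0 n m l r *v x)"
  by (simp add: cartesian_simps Mblk_def M0_def Mi0_def algebra_simps)

lemma Mblk_row_0_mult_transpose_Cmat:
  "c \<noteq> 0 \<Longrightarrow> z \<bullet> e3 = 0 \<Longrightarrow>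
   Mblk n m0 m l s 0 c *v (transpose Cmat *v z) = - (M0 n m l c *v cross3 (s c *\<^sub>R e3) z)"
  unfolding inner_e3 by (simp add: cartesian_simps Mblk_def M0_def algebra_simps)

lemma Cmat_mult_Mblk_row_sum:
  assumes r: "r \<in> {1..n}" and sr: "s r * s r = 1" and z: "\<forall>j\<in>{1..n}. z j \<bullet> e3 = 0"
  shows "Cmat *v (\<Sum>c = 1..n. Mblk n m0 m l s r c *v (transpose Cmat *v z c))
    = Mij n m l r r *\<^sub>R z r
      - (\<Sum>j \<in> {1..n} - {r}. Mij n m l r j *\<^sub>R cross3 (s r *\<^sub>R e3) (cross3 (s j *\<^sub>R e3) (z j)))"
proof -
  have "Cmat *v (\<Sum>c = 1..n. Mblk n m0 m l s r c *v (transpose Cmat *v z c))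
      = (\<Sum>c = 1..n. (s r * s c * Mij n m l r c) *\<^sub>R z c)"
    unfolding matrix_vector_mult_sum
    using r z by (intro sum.cong)
      (auto simp: Mblk_def scaleR_mat_1_mult_vec matrix_vector_mult_scaleR Cmat_transpose_Cmat_mult_vec
        simp del: transpose_matrix_vector)
  also have "\<dots> = Mij n m l r r *\<^sub>R z r + (\<Sum>c \<in> {1..n} - {r}. (s r * s c * Mij n m l r c) *\<^sub>R z c)"
    using r sr by (simp add: sum.remove)
  also have "(\<Sum>c \<in> {1..n} - {r}. (s r * s c * Mij n m l r c) *\<^sub>R z c)
      = - (\<Sum>j \<in> {1..n} - {r}. Mij n m l r j *\<^sub>R cross3 (s r *\<^sub>R e3) (cross3 (s j *\<^sub>R e3) (z j)))"
    unfolding sum_negf[symmetric]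
    by (intro sum.cong) (use z cross3_e3_cross3_e3 in \<open>auto simp: cross_mult_left cross_mult_right\<close>)
  finally show ?thesis by simp
qed

lemma Gblk_row_sum:
  assumes "r \<in> {1..n}"
  shows "(\<Sum>c = 0..n. Gblk n m l s g r c *v (if c = 0 then x else transpose Cmat *v \<xi> c))
    = (s r * Msum n m r * g * l r) *\<^sub>R (transpose Cmat *v \<xi> r)"
proof -
  have "(\<Sum>c = 0..n. Gblk n m l s g r c *v (if c = 0 then x else transpose Cmat *v \<xi> c))
      = (\<Sum>c = 0..n. if c = r then (s r * Msum n m r * g * l r) *\<^sub>R (transpose Cmat *v \<xi> r) else 0)"
    using assms by (intro sum.cong) (auto simp: Gblk_def scaleR_mat_1_mult_vec)
  then show ?thesis using assms by simp
qed

lemma lin_res_cart_cong: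
  "(\<And>j. j \<in> {1..n} \<Longrightarrow> z j = z' j) \<Longrightarrow>
   lin_res_cart n m0 m l s x'' z u = lin_res_cart n m0 m l s x'' z' u"
  unfolding lin_res_cart_def by (metis (no_types, lifting) sum.cong)

lemma lin_res_link_cong:
  "(\<And>j. j \<in> {1..n} \<Longrightarrow> z j = z' j) \<Longrightarrow> i \<in> {1..n} \<Longrightarrow>
   lin_res_link n m l g s i x'' z \<xi> = lin_res_link n m l g s i x'' z' \<xi>"
  unfolding lin_res_link_def by (intro arg_cong2[where f="(-)"] arg_cong2[where f="(+)"] sum.cong) auto

lemma linearized_row_0_iff:
  assumes "\<forall>j\<in>{1..n}. z'' j \<bullet> e3 = 0"
  shows "linearized_row n m0 m l s g x'' z'' x \<xi> u 0 \<longleftrightarrow> lin_res_cart n m0 m l s x'' z'' u = 0"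
proof -
  have "(\<Sum>c = 1..n. Mblk n m0 m l s 0 c *v (if c = 0 then x'' else transpose Cmat *v z'' c))
      = - (\<Sum>j = 1..n. M0 n m l j *v cross3 (s j *\<^sub>R e3) (z'' j))"
    unfolding sum_negf[symmetric] by (intro sum.cong) (use assms Mblk_row_0_mult_transpose_Cmat in auto)
  then show ?thesis
    by (auto simp: linearized_row_def lin_res_cart_def sum.atLeast_Suc_atMost Mblk_def Gblk_def Bblk_def
        scaleR_mat_1_mult_vec algebra_simps)
qed

lemma linearized_row_link_iff:
  assumes r: "r \<in> {1..n}" and sr: "s r = 1 \<or> s r = -1"
    and z: "\<forall>j\<in>{1..n}. z'' j \<bullet> e3 = 0" and \<xi>: "\<xi> r \<bullet> e3 = 0"
  shows "linearized_row n m0 m l s g x'' z'' x \<xi> u r \<longleftrightarrow> lin_res_link n m l g s r x'' z'' (\<xi> r) = 0"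
proof -
  define lhs where "lhs =
    (\<Sum>c = 0..n. Mblk n m0 m l s r c *v (if c = 0 then x'' else transpose Cmat *v z'' c))
    + (\<Sum>c = 0..n. Gblk n m l s g r c *v (if c = 0 then x else transpose Cmat *v \<xi> c))"
  have r0: "r \<noteq> 0" using r by simp
  have lhs: "lhs = Mblk n m0 m l s r 0 *v x'' + (\<Sum>c = 1..n. Mblk n m0 m l s r c *v (transpose Cmat *v z'' c))
      + (s r * Msum n m r * g * l r) *\<^sub>R (transpose Cmat *v \<xi> r)"
    unfolding lhs_def Gblk_row_sum[OF r]
    by (simp add: sum.atLeast_Suc_atMost del: transpose_matrix_vector)
  have sr2: "s r * s r = 1" using sr by auto
  have G: "Cmat *v ((s r * Msum n m r * g * l r) *\<^sub>R (transpose Cmat *v \<xi> r))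
      = - (Msum n m r * g * l r) *\<^sub>R cross3 (cross3 (\<xi> r) (s r *\<^sub>R e3)) e3"
    using cross3_cross3_e3_right[OF \<xi>] Cmat_transpose_Cmat_mult_vec[OF \<xi>]
    by (simp add: matrix_vector_mult_scaleR cross_mult_left cross_mult_right
        del: transpose_matrix_vector)
  have "Cmat *v lhs = lin_res_link n m l g s r x'' z'' (\<xi> r)"
    unfolding lhs matrix_vector_right_distrib Cmat_mult_Mblk_col_0[OF r0]
      Cmat_mult_Mblk_row_sum[where s=s, OF r sr2 z] G
    by (simp add: lin_res_link_def)
  moreover have "linearized_row n m0 m l s g x'' z'' x \<xi> u r \<longleftrightarrow> lhs = 0"
    using r0 by (simp add: linearized_row_def lhs_def Bblk_def)
  ultimately show ?thesis using Cmat_mult_vec_eq_0_iff by metis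
qed

lemma linearized_rows_iff:
  assumes s: "\<forall>i\<in>{1..n}. s i = 1 \<or> s i = -1"
    and z: "\<forall>j\<in>{1..n}. z'' j \<bullet> e3 = 0" and \<xi>: "\<forall>j\<in>{1..n}. \<xi> j \<bullet> e3 = 0"
  shows "(lin_res_cart n m0 m l s x'' z'' u = 0 \<and> (\<forall>i\<in>{1..n}. lin_res_link n m l g s i x'' z'' (\<xi> i) = 0))
    \<longleftrightarrow> (\<forall>r\<in>{0..n}. linearized_row n m0 m l s g x'' z'' x \<xi> u r)"
proof -
  have "{0..n} = insert 0 {1..n}" by auto
  then show ?thesis
    using linearized_row_0_iff[OF z] linearized_row_link_iff[OF _ _ z] s \<xi> by auto
qed

lemma linearized_equations_iff:
  assumes s: "\<forall>i\<in>{1..n}. s i = 1 \<or> s i = -1"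
    and xi_perp: "\<forall>i\<in>{1..n}. \<forall>t. xi i t \<bullet> e3 = 0"
    and dw_perp: "\<forall>i\<in>{1..n}. \<forall>t. dw i t \<bullet> e3 = 0"
    and dxi: "\<forall>i\<in>{1..n}. \<forall>t. (xi i has_vector_derivative xi' i t) (at t)"
    and dxi': "\<forall>i\<in>{1..n}. \<forall>t. (xi' i has_vector_derivative xi'' i t) (at t)"
    and ddw: "\<forall>i\<in>{1..n}. \<forall>t. (dw i has_vector_derivative dw' i t) (at t)"
  shows "(\<forall>t. lin_res_cart n m0 m l s (dx'' t) (\<lambda>j. dw' j t) (du t) = 0
      \<and> (\<forall>i\<in>{1..n}. lin_res_link n m l g s i (dx'' t) (\<lambda>j. dw' j t) (xi i t) = 0
                    \<and> lin_res_kin (s i) (xi' i t) (dw i t) = 0))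
    \<longleftrightarrow> (\<forall>t. (\<forall>i\<in>{1..n}. dw i t = xi' i t)
      \<and> (\<forall>r\<in>{0..n}. linearized_row n m0 m l s g (dx'' t) (\<lambda>j. xi'' j t) (dx t) (\<lambda>j. xi j t) (du t) r))"
proof -
  have perp: "xi' i t \<bullet> e3 = 0" "xi'' i t \<bullet> e3 = 0" if "i \<in> {1..n}" for i t
  proof -
    show "xi' i t \<bullet> e3 = 0" for t
      using has_vector_derivative_orthogonal[of "xi i" e3] xi_perp dxi that by blast
    then show "xi'' i t \<bullet> e3 = 0"
      using has_vector_derivative_orthogonal[of "xi' i" e3] dxi' that by blast
  qed
  have kin: "lin_res_kin (s i) (xi' i t) (dw i t) = 0 \<longleftrightarrow> dw i t = xi' i t" if "i \<in> {1..n}" for i t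
    using lin_res_kin_eq_0_iff[of "s i" "xi' i t" "dw i t"] s perp dw_perp that by fastforce
  have rows: "(lin_res_cart n m0 m l s (dx'' t) (\<lambda>j. dw' j t) (du t) = 0
      \<and> (\<forall>i\<in>{1..n}. lin_res_link n m l g s i (dx'' t) (\<lambda>j. dw' j t) (xi i t) = 0))
    \<longleftrightarrow> (\<forall>r\<in>{0..n}. linearized_row n m0 m l s g (dx'' t) (\<lambda>j. xi'' j t) (dx t) (\<lambda>j. xi j t) (du t) r)"
    if dw: "\<forall>i\<in>{1..n}. \<forall>t. dw i t = xi' i t" for t
  proof -
    have "dw' j t = xi'' j t" if "j \<in> {1..n}" for j
    proof -
      have "dw j = xi' j" using that dw by auto
      then have "(xi' j has_vector_derivative dw' j t) (at t)" using ddw that by metis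
      then show ?thesis using dxi' that vector_derivative_unique_at by blast
    qed
    then show ?thesis
      using linearized_rows_iff[OF s, of "\<lambda>j. xi'' j t" "\<lambda>j. xi j t"] perp xi_perp
        lin_res_cart_cong[of n "\<lambda>j. dw' j t" "\<lambda>j. xi'' j t"]
        lin_res_link_cong[of n "\<lambda>j. dw' j t" "\<lambda>j. xi'' j t"]
      by auto
  qed
  show ?thesis using kin rows by blast
qed

theorem proposition2:
  fixes n :: nat and m0 g :: real and m l s :: "nat \<Rightarrow> real"
    and dx dx' dx'' du :: "real \<Rightarrow> real^2"
    and xi xi' xi'' dw dw' :: "nat \<Rightarrow> real \<Rightarrow> real^3"
  assumes n: "n \<ge> 1" and m0: "m0 > 0" and g: "g > 0"
    and ml: "\<forall>i\<in>{1..n}. m i > 0 \<and> l i > 0"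
    and s: "\<forall>i\<in>{1..n}. s i = 1 \<or> s i = -1"
    and ddx: "\<forall>t. (dx has_vector_derivative dx' t) (at t)"
    and ddx': "\<forall>t. (dx' has_vector_derivative dx'' t) (at t)"
    and dxi: "\<forall>i\<in>{1..n}. \<forall>t. (xi i has_vector_derivative xi' i t) (at t)"
    and dxi': "\<forall>i\<in>{1..n}. \<forall>t. (xi' i has_vector_derivative xi'' i t) (at t)"
    and ddw: "\<forall>i\<in>{1..n}. \<forall>t. (dw i has_vector_derivative dw' i t) (at t)"
    and xi_perp: "\<forall>i\<in>{1..n}. \<forall>t. xi i t \<bullet> e3 = 0"
    and dw_perp: "\<forall>i\<in>{1..n}. \<forall>t. dw i t \<bullet> e3 = 0"
  shows
    "(\<forall>t. (\<lambda>\<epsilon>. R_cart n m0 m l s dx xi dw du \<epsilon> t) differentiable (at 0)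
        \<and> (\<forall>i\<in>{1..n}. (\<lambda>\<epsilon>. R_link n m l g s dx xi dw \<epsilon> i t) differentiable (at 0)
                      \<and> (\<lambda>\<epsilon>. R_kin s xi dw \<epsilon> i t) differentiable (at 0)))
     \<and>
     ((\<forall>t. vector_derivative (\<lambda>\<epsilon>. R_cart n m0 m l s dx xi dw du \<epsilon> t) (at 0) = 0
        \<and> (\<forall>i\<in>{1..n}. vector_derivative (\<lambda>\<epsilon>. R_link n m l g s dx xi dw \<epsilon> i t) (at 0) = 0
                      \<and> vector_derivative (\<lambda>\<epsilon>. R_kin s xi dw \<epsilon> i t) (at 0) = 0))
      \<longleftrightarrow>
      (\<forall>t. (\<forall>i\<in>{1..n}. dw i t = xi' i t)
        \<and> (\<forall>r\<in>{0..n}.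
             (\<Sum>c = 0..n. Mblk n m0 m l s r c *v
                  (if c = 0 then dx'' t else transpose Cmat *v xi'' c t))
           + (\<Sum>c = 0..n. Gblk n m l s g r c *v
                  (if c = 0 then dx t else transpose Cmat *v xi c t))
           = Bblk r *v du t)))"
proof -
  note D_cart = has_vector_derivative_R_cart[OF ddx ddx' ddw]
  note D_link = has_vector_derivative_R_link[OF ddx ddx' ddw]
  note D_kin = has_vector_derivative_R_kin[OF dxi dxi']
  show ?thesis
    using linearized_equations_iff[OF s xi_perp dw_perp dxi dxi' ddw]
      D_cart[THEN vector_derivative_at] D_link[THEN vector_derivative_at]
      D_kin[THEN vector_derivative_at] D_cart[THEN differentiableI_vector]
      D_link[THEN differentiableI_vector] D_kin[THEN differentiableI_vector]
    by (simp add: linearized_row_def)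
qed

end
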